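(* Let $\epsilon\ge0$ and let $Q:\mathbb{R}\to\Delta(\mathbb{R})$ be a mechanism of the form $Qu=u+V$, where $V$ is a real random variable with distribution independent of $u$. If $Q$ is $\epsilon$-Lipschitz private with respect to the metric $|u-u'|$ on $\mathbb{R}$, then $V$ possesses a density (its distribution is absolutely continuous with respect to Lebesgue measure).
   Context: $\Delta(\mathbb{R})$ denotes the set of Borel probability measures on $\mathbb{R}$. A mechanism $Q:\mathbb{R}\to\Delta(\mathbb{R})$ is $\epsilon$-Lipschitz private if for all $u,u'\in\mathbb{R}$ and all Borel $\mathcal{S}\subseteq\mathbb{R}$, $|\ln\mathbb{P}(Qu\in\mathcal{S})-\ln\mathbb{P}(Qu'\in\mathcal{S})|\le\epsilon|u-u'|$, equivalently $\mathbb{P}(Qu\in\mathcal{S})\le e^{\epsilon|u-u'|}\mathbb{P}(Qu'\in\mathcal{S})$. *)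

theory Defs
  imports "HOL-Probability.Probability"
begin

definition lipschitz_private :: "real \<Rightarrow> (real \<Rightarrow> real measure) \<Rightarrow> bool" where
  "lipschitz_private \<epsilon> Q \<longleftrightarrow>
     (\<forall>u u' S. S \<in> sets borel \<longrightarrow>
        measure (Q u) S \<le> exp (\<epsilon> * \<bar>u - u'\<bar>) * measure (Q u') S)"

definition additive_mechanism :: "real measure \<Rightarrow> real \<Rightarrow> real measure" where
  "additive_mechanism D u = distr D borel (\<lambda>v. u + v)"

end

theory Submission
  imports Defs
begin

text \<open>If S is Lebesgue-null, Fubini shows that almost every translate S - u is null for the
  noise distribution D. Choosing such a u, privacy bounds D(S) = Q 0 (S) by a constant times
  Q u (S) = D(S - u) = 0.\<close>

lemma AE_lborel_translate_null:
  fixes D :: "real measure"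
  assumes "sigma_finite_measure D" and "sets D = sets borel" and "S \<in> null_sets lborel"
  shows "AE u in lborel. (\<lambda>v. u + v) -` S \<in> null_sets D"
proof -
  interpret D: sigma_finite_measure D by fact
  interpret pair_sigma_finite lborel D
    by (simp add: pair_sigma_finite_def lborel.sigma_finite_measure_axioms D.sigma_finite_measure_axioms)
  have S: "S \<in> sets borel" using assms(3) by auto
  have space_D: "space D = UNIV" using sets_eq_imp_space_eq[OF assms(2)] by simp
  define A where "A = {p :: real \<times> real. fst p + snd p \<in> S}"
  have "(\<lambda>p::real \<times> real. fst p + snd p) \<in> borel_measurable (lborel \<Otimes>\<^sub>M D)"
    using measurable_cong_sets[OF refl assms(2)] by (intro borel_measurable_add) auto
  from measurable_sets[OF this S]
  have A: "A \<in> sets (lborel \<Otimes>\<^sub>M D)"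
    by (simp add: A_def space_pair_measure space_D vimage_def)
  have "emeasure lborel ((\<lambda>x. (x, v)) -` A) = 0" for v
  proof -
    have "(\<lambda>x. (x, v)) -` A = (+) v -` S \<inter> space lborel" by (auto simp: A_def add.commute)
    also have "emeasure lborel \<dots> = emeasure (distr lborel borel ((+) v)) S"
      using S by (subst emeasure_distr) auto
    also have "\<dots> = 0" using assms(3) by (simp add: lborel_distr_plus null_setsD1)
    finally show ?thesis .
  qed
  then have "emeasure (lborel \<Otimes>\<^sub>M D) A = 0"
    using emeasure_pair_measure_alt2[OF A] by simp
  then have "(\<integral>\<^sup>+u. emeasure D (Pair u -` A) \<partial>lborel) = 0"
    using D.emeasure_pair_measure_alt[OF A] by simp
  then have "AE u in lborel. emeasure D (Pair u -` A) = 0"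
    using nn_integral_0_iff_AE[OF measurable_emeasure_Pair1[OF A]] by simp
  moreover have "Pair u -` A = (\<lambda>v. u + v) -` S" for u by (auto simp: A_def)
  moreover have "(\<lambda>v. u + v) -` S \<in> sets D" for u
    using measurable_sets[of "(+) u" borel borel S] S assms(2) by simp
  ultimately show ?thesis by (simp add: null_sets_def)
qed

lemma ae_filter_lborel_neq_bot: "ae_filter (lborel :: real measure) \<noteq> bot"
  by (simp add: ae_filter_eq_bot_iff)

lemma measure_additive_mechanism:
  fixes D :: "real measure"
  assumes "sets D = sets borel" and "S \<in> sets borel"
  shows "measure (additive_mechanism D u) S = measure D ((\<lambda>v. u + v) -` S)"
proof -
  have "(\<lambda>v. u + v) \<in> D \<rightarrow>\<^sub>M borel"
    by (subst measurable_cong_sets[OF assms(1) refl]) simp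
  then show ?thesis
    using assms sets_eq_imp_space_eq[OF assms(1)]
    by (simp add: additive_mechanism_def measure_distr)
qed

theorem lemma1:
  fixes \<epsilon> :: real and D :: "real measure"
  assumes "\<epsilon> \<ge> 0"
    and "prob_space D" and "sets D = sets borel"
    and "lipschitz_private \<epsilon> (additive_mechanism D)"
  shows "absolutely_continuous lborel D"
  unfolding absolutely_continuous_def
proof
  fix S :: "real set" assume null: "S \<in> null_sets lborel"
  interpret prob_space D by fact
  have S: "S \<in> sets borel" using null by auto
  obtain u where u: "(\<lambda>v. u + v) -` S \<in> null_sets D"
    using eventually_happens'[OF ae_filter_lborel_neq_bot
        AE_lborel_translate_null[OF sigma_finite_measure_axioms assms(3) null]] ..
  have "measure D S = measure (additive_mechanism D 0) S"
    using measure_additive_mechanism[OF assms(3) S] by simp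
  also have "\<dots> \<le> exp (\<epsilon> * \<bar>0 - u\<bar>) * measure (additive_mechanism D u) S"
    using assms(4) S unfolding lipschitz_private_def by blast
  also have "measure (additive_mechanism D u) S = 0"
    using measure_additive_mechanism[OF assms(3) S] null_setsD1[OF u] by (simp add: measure_def)
  finally have "emeasure D S = 0" by (simp add: antisym emeasure_eq_measure)
  then show "S \<in> null_sets D"
    using S assms(3) by auto
qed

end
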